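(* Let $\mathbb Z\langle X\rangle$ be the free unital associative ring on $X=\{x_1,x_2,\dots\}$ and let $I$ be the left ideal of $\mathbb Z\langle X\rangle$ generated by a set $S\subset\Gamma$; let $\Gamma\cdot S$ be the left ideal of $\Gamma$ generated by $S$. Then the additive group $\mathbb Z\langle X\rangle/I$ is isomorphic to \[\Gamma/(\Gamma\cdot S)\;\oplus\bigoplus_{s\ge1;\ i_1\le\dots\le i_s}(x_{i_1}\cdots x_{i_s}\Gamma)/(x_{i_1}\cdots x_{i_s}\Gamma\cdot S),\] and for all $s\ge1$, $i_1\le\dots\le i_s$, the group $(x_{i_1}\cdots x_{i_s}\Gamma)/(x_{i_1}\cdots x_{i_s}\Gamma\cdot S)$ is isomorphic to $\Gamma/(\Gamma\cdot S)$ via the isomorphism induced by $f\mapsto x_{i_1}\cdots x_{i_s}f$ ($f\in\Gamma$).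
   Context: $\Gamma$ is the unital subring of $\mathbb Z\langle X\rangle$ generated by all left-normed commutators $[x_{i_1},\dots,x_{i_l}]$ with $l\ge2$ (where $[a,b]=ab-ba$, $[a_1,\dots,a_n]=[[a_1,\dots,a_{n-1}],a_n]$). *)

theory Defs
  imports "HOL-Algebra.Algebra"
begin

text \<open>An element of Z<X> is an integer-valued function on words (lists of variable
  indices) with finite support; the word [i1,...,is] stands for x_i1 ... x_is.\<close>

type_synonym ncpoly = "nat list \<Rightarrow> int"

definition ZX :: "ncpoly set" where
  "ZX = {f. finite {w. f w \<noteq> 0}}"

definition nc_add :: "ncpoly \<Rightarrow> ncpoly \<Rightarrow> ncpoly" where
  "nc_add f g = (\<lambda>w. f w + g w)"

definition nc_neg :: "ncpoly \<Rightarrow> ncpoly" where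
  "nc_neg f = (\<lambda>w. - f w)"

definition nc_zero :: ncpoly where
  "nc_zero = (\<lambda>w. 0)"

definition nc_one :: ncpoly where
  "nc_one = (\<lambda>w. if w = [] then 1 else 0)"

definition nc_mult :: "ncpoly \<Rightarrow> ncpoly \<Rightarrow> ncpoly" where
  "nc_mult f g = (\<lambda>w. \<Sum>k\<le>length w. f (take k w) * g (drop k w))"

definition nc_mono :: "nat list \<Rightarrow> ncpoly" where
  "nc_mono u = (\<lambda>w. if w = u then 1 else 0)"

definition nc_var :: "nat \<Rightarrow> ncpoly" where
  "nc_var i = nc_mono [i]"

definition nc_comm :: "ncpoly \<Rightarrow> ncpoly \<Rightarrow> ncpoly" where
  "nc_comm a b = nc_add (nc_mult a b) (nc_neg (nc_mult b a))"

text \<open>Left-normed commutator [x_i1, ..., x_il] (list of indices, length l \<ge> 2):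
  [a_1,...,a_n] = [[a_1,...,a_(n-1)], a_n].\<close>
definition left_comm :: "nat list \<Rightarrow> ncpoly" where
  "left_comm is = foldl (\<lambda>c i. nc_comm c (nc_var i)) (nc_var (hd is)) (tl is)"

inductive_set Gamma :: "ncpoly set" where
  Gamma_comm: "length is \<ge> 2 \<Longrightarrow> left_comm is \<in> Gamma"
| Gamma_one: "nc_one \<in> Gamma"
| Gamma_add: "f \<in> Gamma \<Longrightarrow> g \<in> Gamma \<Longrightarrow> nc_add f g \<in> Gamma"
| Gamma_neg: "f \<in> Gamma \<Longrightarrow> nc_neg f \<in> Gamma"
| Gamma_mult: "f \<in> Gamma \<Longrightarrow> g \<in> Gamma \<Longrightarrow> nc_mult f g \<in> Gamma"

inductive_set left_ideal_gen :: "ncpoly set \<Rightarrow> ncpoly set \<Rightarrow> ncpoly set"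
  for R :: "ncpoly set" and S :: "ncpoly set" where
  lig_gen: "s \<in> S \<Longrightarrow> s \<in> left_ideal_gen R S"
| lig_zero: "nc_zero \<in> left_ideal_gen R S"
| lig_add: "f \<in> left_ideal_gen R S \<Longrightarrow> g \<in> left_ideal_gen R S \<Longrightarrow> nc_add f g \<in> left_ideal_gen R S"
| lig_neg: "f \<in> left_ideal_gen R S \<Longrightarrow> nc_neg f \<in> left_ideal_gen R S"
| lig_lmult: "r \<in> R \<Longrightarrow> f \<in> left_ideal_gen R S \<Longrightarrow> nc_mult r f \<in> left_ideal_gen R S"

definition add_grp :: "ncpoly set \<Rightarrow> ncpoly monoid" where
  "add_grp A = \<lparr>carrier = A, monoid.mult = nc_add, one = nc_zero\<rparr>"

definition lmult_set :: "nat list \<Rightarrow> ncpoly set \<Rightarrow> ncpoly set" where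
  "lmult_set u A = (\<lambda>f. nc_mult (nc_mono u) f) ` A"

text \<open>Index set of the direct sum: nonempty nondecreasing sequences i_1 \<le> ... \<le> i_s.\<close>
definition sorted_words :: "nat list set" where
  "sorted_words = {u. u \<noteq> [] \<and> sorted u}"

end

theory Submission
  imports Defs "HOL-Library.Function_Algebras" "HOL-Library.Multiset"
begin

text \<open>
  Sorting adjacent letters with \<open>x\<^sub>j x\<^sub>i = x\<^sub>i x\<^sub>j + [x\<^sub>j, x\<^sub>i]\<close> and moving letters to the left
  past a left-normed commutator with \<open>c x\<^sub>j = x\<^sub>j c + [c, x\<^sub>j]\<close> (again a left-normed
  commutator) rewrites every \<open>x\<^sub>w \<rho>\<close> as a sum of terms \<open>x\<^sub>u \<gamma>\<^sub>u \<rho>\<close> with \<open>u\<close> nondecreasing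
  and \<open>\<gamma>\<^sub>u \<in> \<Gamma>\<close>. These sorted monomials are left independent over \<open>\<Gamma>\<close>: the derivation
  \<open>\<partial>\<^sub>i\<close> with \<open>\<partial>\<^sub>i x\<^sub>j = \<delta>\<^sub>i\<^sub>j\<close> kills all commutators, hence all of \<open>\<Gamma>\<close>, and sends \<open>x\<^sub>u \<gamma>\<close> to a
  positive multiple of \<open>x\<^sub>v \<gamma>\<close>, where \<open>v\<close> is \<open>u\<close> with one letter \<open>i\<close> removed, so induction on
  the length applies. Hence \<open>\<int>\<langle>X\<rangle> = \<Oplus>\<^sub>u x\<^sub>u \<Gamma>\<close>, and rewriting with \<open>\<rho> \<in> \<Gamma>\<cdot>S\<close> shows that
  the left ideal generated by \<open>S\<close> is \<open>\<Oplus>\<^sub>u x\<^sub>u (\<Gamma>\<cdot>S)\<close>. Left multiplication by a monomial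
  is injective, which identifies each summand with \<open>\<Gamma>/(\<Gamma>\<cdot>S)\<close>.
\<close>

definition splits :: "nat list \<Rightarrow> (nat list \<times> nat list) set" where
  "splits w = {(p, q). p @ q = w}"

definition splits3 :: "nat list \<Rightarrow> (nat list \<times> nat list \<times> nat list) set" where
  "splits3 w = {(a, b, c). a @ b @ c = w}"

lemma splits_conv_take_drop: "splits w = (\<lambda>k. (take k w, drop k w)) ` {..length w}"
  unfolding splits_def
proof safe
  fix p q
  show "(p, q) \<in> (\<lambda>k. (take k (p @ q), drop k (p @ q))) ` {..length (p @ q)}"
    by (intro image_eqI[where x = "length p"]) auto
qed auto

lemma finite_splits [simp]: "finite (splits w)"
  by (simp add: splits_conv_take_drop)

lemma nc_mult_conv_splits: "nc_mult f g w = (\<Sum>(p, q)\<in>splits w. f p * g q)"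
proof -
  have "inj_on (\<lambda>k. (take k w, drop k w)) {..length w}"
    by (auto simp: inj_on_def) (metis length_take min_absorb2)
  then show ?thesis
    unfolding nc_mult_def splits_conv_take_drop by (simp add: sum.reindex)
qed

lemma sum_splits_left:
  "(\<Sum>(p, q)\<in>splits w. \<Sum>(a, b)\<in>splits p. F a b q) = (\<Sum>(a, b, c)\<in>splits3 w. F a b c)"
proof -
  have "(\<Sum>(p, q)\<in>splits w. \<Sum>(a, b)\<in>splits p. F a b q)
      = (\<Sum>(x, y)\<in>(SIGMA x:splits w. splits (fst x)). F (fst y) (snd y) (snd x))"
    by (subst sum.Sigma[symmetric]) (auto simp: case_prod_beta)
  also have "\<dots> = (\<Sum>(a, b, c)\<in>splits3 w. F a b c)"
    by (rule sum.reindex_bij_witness[where i = "\<lambda>(a, b, c). ((a @ b, c), (a, b))"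
          and j = "\<lambda>((p, q), (a, b)). (a, b, q)"])
       (auto simp: splits_def splits3_def)
  finally show ?thesis .
qed

lemma sum_splits_right:
  "(\<Sum>(p, q)\<in>splits w. \<Sum>(b, c)\<in>splits q. F p b c) = (\<Sum>(a, b, c)\<in>splits3 w. F a b c)"
proof -
  have "(\<Sum>(p, q)\<in>splits w. \<Sum>(b, c)\<in>splits q. F p b c)
      = (\<Sum>(x, y)\<in>(SIGMA x:splits w. splits (snd x)). F (fst x) (fst y) (snd y))"
    by (subst sum.Sigma[symmetric]) (auto simp: case_prod_beta)
  also have "\<dots> = (\<Sum>(a, b, c)\<in>splits3 w. F a b c)"
    by (rule sum.reindex_bij_witness[where i = "\<lambda>(a, b, c). ((a, b @ c), (b, c))"
          and j = "\<lambda>((p, q), (b, c)). (p, b, c)"])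
       (auto simp: splits_def splits3_def)
  finally show ?thesis .
qed

lemma nc_mult_assoc: "nc_mult (nc_mult f g) h = nc_mult f (nc_mult g h)"
proof
  fix w
  have "nc_mult (nc_mult f g) h w = (\<Sum>(p, q)\<in>splits w. \<Sum>(a, b)\<in>splits p. f a * g b * h q)"
    by (simp add: nc_mult_conv_splits sum_distrib_right case_prod_beta)
  also have "\<dots> = (\<Sum>(a, b, c)\<in>splits3 w. f a * g b * h c)"
    by (rule sum_splits_left)
  also have "\<dots> = (\<Sum>(p, q)\<in>splits w. \<Sum>(b, c)\<in>splits q. f p * (g b * h c))"
    by (subst sum_splits_right) (simp add: mult.assoc)
  also have "\<dots> = nc_mult f (nc_mult g h) w"
    by (simp add: nc_mult_conv_splits sum_distrib_left case_prod_beta)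
  finally show "nc_mult (nc_mult f g) h w = nc_mult f (nc_mult g h) w" .
qed

lemma nc_add_eq_plus: "nc_add f g = f + g"
  by (simp add: nc_add_def plus_fun_def)

lemma nc_neg_eq_uminus: "nc_neg f = - f"
  by (simp add: nc_neg_def fun_Compl_def)

lemma nc_zero_eq_0: "nc_zero = 0"
  by (simp add: nc_zero_def zero_fun_def)

lemma nc_comm_eq_diff: "nc_comm a b = nc_mult a b - nc_mult b a"
  by (simp add: nc_comm_def nc_add_eq_plus nc_neg_eq_uminus)

definition nc_smult :: "int \<Rightarrow> ncpoly \<Rightarrow> ncpoly" where
  "nc_smult k f = (\<lambda>w. k * f w)"

lemma nc_mult_add_left: "nc_mult (f + g) h = nc_mult f h + nc_mult g h"
  by (rule ext) (simp add: nc_mult_def distrib_right sum.distrib)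

lemma nc_mult_add_right: "nc_mult f (g + h) = nc_mult f g + nc_mult f h"
  by (rule ext) (simp add: nc_mult_def distrib_left sum.distrib)

lemma nc_mult_zero_left [simp]: "nc_mult 0 h = 0"
  by (rule ext) (simp add: nc_mult_def)

lemma nc_mult_zero_right [simp]: "nc_mult f 0 = 0"
  by (rule ext) (simp add: nc_mult_def)

lemma nc_mult_minus_left: "nc_mult (- f) h = - nc_mult f h"
  by (rule ext) (simp add: nc_mult_def sum_negf)

lemma nc_mult_minus_right: "nc_mult f (- h) = - nc_mult f h"
  by (rule ext) (simp add: nc_mult_def sum_negf)

lemma nc_mult_diff_right: "nc_mult f (g - h) = nc_mult f g - nc_mult f h"
  by (simp only: diff_conv_add_uminus nc_mult_add_right nc_mult_minus_right)

lemma nc_mult_sum_left: "nc_mult (\<Sum>a\<in>A. F a) h = (\<Sum>a\<in>A. nc_mult (F a) h)"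
  using sum_comp_morphism[of "\<lambda>f. nc_mult f h" F A] by (simp add: nc_mult_add_left comp_def)

lemma nc_mult_sum_right: "nc_mult h (\<Sum>a\<in>A. F a) = (\<Sum>a\<in>A. nc_mult h (F a))"
  using sum_comp_morphism[of "\<lambda>f. nc_mult h f" F A] by (simp add: nc_mult_add_right comp_def)

lemma nc_mult_smult_left: "nc_mult (nc_smult k f) h = nc_smult k (nc_mult f h)"
  by (rule ext) (simp add: nc_mult_def nc_smult_def sum_distrib_left mult.assoc)

lemma nc_mult_smult_right: "nc_mult f (nc_smult k h) = nc_smult k (nc_mult f h)"
  by (rule ext) (simp add: nc_mult_def nc_smult_def sum_distrib_left mult.left_commute)

lemma nc_mono_mult_apply:
  "nc_mult (nc_mono a) f w = (if take (length a) w = a then f (drop (length a) w) else 0)"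
proof -
  have "nc_mult (nc_mono a) f w
      = (\<Sum>x\<in>splits w. if x = (a, drop (length a) w) then f (drop (length a) w) else 0)"
    unfolding nc_mult_conv_splits
    by (rule sum.cong) (auto simp: nc_mono_def splits_def split: if_splits)
  also have "\<dots> = (if take (length a) w = a then f (drop (length a) w) else 0)"
    by (subst sum.delta[OF finite_splits]) (auto simp: splits_def append_eq_conv_conj)
  finally show ?thesis .
qed

lemma nc_mono_Nil: "nc_mono [] = nc_one"
  by (simp add: nc_mono_def nc_one_def)

lemma nc_mult_one_left [simp]: "nc_mult nc_one f = f"
  by (rule ext) (simp add: nc_mono_Nil[symmetric] nc_mono_mult_apply)

lemma nc_mult_one_right [simp]: "nc_mult f nc_one = f"
proof
  fix w
  have "nc_mult f nc_one w = (\<Sum>x\<in>splits w. if x = (w, []) then f w else 0)"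
    unfolding nc_mult_conv_splits by (rule sum.cong) (auto simp: nc_one_def splits_def)
  also have "\<dots> = f w"
    by (subst sum.delta[OF finite_splits]) (auto simp: splits_def)
  finally show "nc_mult f nc_one w = f w" .
qed

lemma nc_mono_mult_mono: "nc_mult (nc_mono a) (nc_mono b) = nc_mono (a @ b)"
proof
  fix w
  show "nc_mult (nc_mono a) (nc_mono b) w = nc_mono (a @ b) w"
    unfolding nc_mono_mult_apply by (auto simp: nc_mono_def append_eq_conv_conj, metis append_take_drop_id)
qed

lemma nc_mono_mult_assoc:
  "nc_mult (nc_mono a) (nc_mult (nc_mono b) f) = nc_mult (nc_mono (a @ b)) f"
  by (simp add: nc_mult_assoc[symmetric] nc_mono_mult_mono)

lemma inj_nc_mono_mult: "inj (nc_mult (nc_mono u))"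
proof (rule injI)
  fix f g
  assume "nc_mult (nc_mono u) f = nc_mult (nc_mono u) g"
  then have "nc_mult (nc_mono u) f (u @ v) = nc_mult (nc_mono u) g (u @ v)" for v
    by simp
  then show "f = g"
    by (simp add: nc_mono_mult_apply fun_eq_iff)
qed

locale subgroup_add =
  fixes A :: "'a::ab_group_add set"
  assumes zero_mem [simp]: "0 \<in> A"
    and add_mem: "x \<in> A \<Longrightarrow> y \<in> A \<Longrightarrow> x + y \<in> A"
    and uminus_mem: "x \<in> A \<Longrightarrow> - x \<in> A"
begin

lemma diff_mem: "x \<in> A \<Longrightarrow> y \<in> A \<Longrightarrow> x - y \<in> A"
  by (simp only: diff_conv_add_uminus add_mem uminus_mem)

lemma sum_mem: "(\<And>a. a \<in> B \<Longrightarrow> F a \<in> A) \<Longrightarrow> (\<Sum>a\<in>B. F a) \<in> A"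
  by (induction B rule: infinite_finite_induct) (simp_all add: add_mem)

end

lemma subgroup_add_nc_smult:
  assumes "subgroup_add A" "f \<in> A"
  shows "nc_smult k f \<in> A"
proof -
  interpret subgroup_add A by fact
  have nat_case: "nc_smult (int n) f \<in> A" for n
  proof (induction n)
    case 0
    then show ?case
      by (simp add: nc_smult_def zero_fun_def[symmetric])
  next
    case (Suc n)
    have "nc_smult (int (Suc n)) f = nc_smult (int n) f + f"
      by (rule ext) (simp add: nc_smult_def algebra_simps)
    then show ?case
      using Suc add_mem assms(2) by (simp only:)
  qed
  show ?thesis
  proof (cases "k \<ge> 0")
    case True
    then obtain n where "k = int n"
      using nonneg_int_cases by blast
    then show ?thesis
      using nat_case by (simp only:)
  next
    case False
    then have "nc_smult k f = - nc_smult (int (nat (- k))) f"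
      by (intro ext) (simp add: nc_smult_def)
    then show ?thesis
      using uminus_mem[OF nat_case] by (simp only:)
  qed
qed

interpretation ZX: subgroup_add ZX
proof
  show "0 \<in> ZX"
    by (simp add: ZX_def)
  show "- f \<in> ZX" if "f \<in> ZX" for f
    using that by (simp add: ZX_def)
  show "f + g \<in> ZX" if "f \<in> ZX" "g \<in> ZX" for f g
  proof -
    have "{w. (f + g) w \<noteq> 0} \<subseteq> {w. f w \<noteq> 0} \<union> {w. g w \<noteq> 0}"
      by auto
    with that show ?thesis
      unfolding ZX_def by (auto intro: finite_subset)
  qed
qed

lemma nc_mono_in_ZX: "nc_mono u \<in> ZX"
  unfolding ZX_def by (auto simp: nc_mono_def intro: finite_subset[of _ "{u}"])

lemma nc_mult_in_ZX:
  assumes "f \<in> ZX" "g \<in> ZX"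
  shows "nc_mult f g \<in> ZX"
proof -
  have "{w. nc_mult f g w \<noteq> 0} \<subseteq> (\<lambda>(p, q). p @ q) ` ({w. f w \<noteq> 0} \<times> {w. g w \<noteq> 0})"
  proof
    fix w
    assume "w \<in> {w. nc_mult f g w \<noteq> 0}"
    then obtain x where "x \<in> splits w" "(case x of (p, q) \<Rightarrow> f p * g q) \<noteq> 0"
      by (auto simp: nc_mult_conv_splits elim: sum.not_neutral_contains_not_neutral)
    then show "w \<in> (\<lambda>(p, q). p @ q) ` ({w. f w \<noteq> 0} \<times> {w. g w \<noteq> 0})"
      by (auto simp: splits_def)
  qed
  moreover have "finite ({w. f w \<noteq> 0} \<times> {w. g w \<noteq> 0})"
    using assms by (auto simp: ZX_def)
  ultimately show ?thesis
    unfolding ZX_def by (auto intro: finite_subset)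
qed

lemma sum_fun_apply: "(\<Sum>a\<in>A. F a) x = (\<Sum>a\<in>A. F a x)"
  by (induction A rule: infinite_finite_induct) simp_all

lemma ZX_monomial_expansion:
  assumes "f \<in> ZX"
  shows "f = (\<Sum>w\<in>{w. f w \<noteq> 0}. nc_smult (f w) (nc_mono w))"
proof
  fix v
  have "(\<Sum>w\<in>{w. f w \<noteq> 0}. nc_smult (f w) (nc_mono w)) v
      = (\<Sum>w\<in>{w. f w \<noteq> 0}. if v = w then f w else 0)"
    by (auto simp: sum_fun_apply nc_smult_def nc_mono_def intro: sum.cong)
  also have "\<dots> = f v"
    using assms by (simp add: ZX_def sum.delta)
  finally show "f v = (\<Sum>w\<in>{w. f w \<noteq> 0}. nc_smult (f w) (nc_mono w)) v"
    by simp
qed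

lemma nc_comm_in_ZX: "a \<in> ZX \<Longrightarrow> b \<in> ZX \<Longrightarrow> nc_comm a b \<in> ZX"
  by (simp add: nc_comm_eq_diff ZX.diff_mem nc_mult_in_ZX)

lemma left_comm_in_ZX: "left_comm is \<in> ZX"
proof -
  have "foldl (\<lambda>c i. nc_comm c (nc_var i)) c js \<in> ZX" if "c \<in> ZX" for c js
    using that by (induction js arbitrary: c) (simp_all add: nc_comm_in_ZX nc_var_def nc_mono_in_ZX)
  then show ?thesis
    by (simp add: left_comm_def nc_var_def nc_mono_in_ZX)
qed

interpretation Gamma: subgroup_add Gamma
proof
  show "f + g \<in> Gamma" if "f \<in> Gamma" "g \<in> Gamma" for f g
    using Gamma_add[OF that] by (simp only: nc_add_eq_plus)
  show "- f \<in> Gamma" if "f \<in> Gamma" for f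
    using Gamma_neg[OF that] by (simp only: nc_neg_eq_uminus)
  have "nc_one + - nc_one \<in> Gamma"
    using Gamma_add[OF Gamma_one Gamma_neg[OF Gamma_one]] by (simp only: nc_add_eq_plus nc_neg_eq_uminus)
  then show "0 \<in> Gamma"
    by simp
qed

lemma Gamma_subset_ZX: "Gamma \<subseteq> ZX"
proof
  fix f
  assume "f \<in> Gamma"
  then show "f \<in> ZX"
    by (induction rule: Gamma.induct)
       (auto simp only: nc_add_eq_plus nc_neg_eq_uminus nc_mono_Nil[symmetric]
         intro: left_comm_in_ZX ZX.add_mem ZX.uminus_mem nc_mult_in_ZX nc_mono_in_ZX)
qed

interpretation left_ideal_gen: subgroup_add "left_ideal_gen R S" for R S
proof
  show "0 \<in> left_ideal_gen R S"
    using lig_zero by (simp only: nc_zero_eq_0)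
  show "f + g \<in> left_ideal_gen R S" if "f \<in> left_ideal_gen R S" "g \<in> left_ideal_gen R S" for f g
    using lig_add[OF that] by (simp only: nc_add_eq_plus)
  show "- f \<in> left_ideal_gen R S" if "f \<in> left_ideal_gen R S" for f
    using lig_neg[OF that] by (simp only: nc_neg_eq_uminus)
qed

lemma left_ideal_gen_mono:
  assumes "R \<subseteq> R'"
  shows "left_ideal_gen R S \<subseteq> left_ideal_gen R' S"
proof
  fix f
  assume "f \<in> left_ideal_gen R S"
  then show "f \<in> left_ideal_gen R' S"
    by (induction rule: left_ideal_gen.induct) (use assms in \<open>auto intro: left_ideal_gen.intros\<close>)
qed

lemma left_ideal_gen_subset:
  assumes "subgroup_add R" "\<And>r f. r \<in> R \<Longrightarrow> f \<in> R \<Longrightarrow> nc_mult r f \<in> R" "S \<subseteq> R"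
  shows "left_ideal_gen R S \<subseteq> R"
proof
  interpret subgroup_add R by fact
  fix f
  assume "f \<in> left_ideal_gen R S"
  then show "f \<in> R"
    by (induction rule: left_ideal_gen.induct)
       (use assms in \<open>auto simp only: nc_zero_eq_0 nc_add_eq_plus nc_neg_eq_uminus
         intro: zero_mem add_mem uminus_mem\<close>)
qed

lemma left_ideal_gen_Gamma_subset: "S \<subseteq> Gamma \<Longrightarrow> left_ideal_gen Gamma S \<subseteq> Gamma"
  by (rule left_ideal_gen_subset[OF Gamma.subgroup_add_axioms Gamma_mult])

definition left_comms :: "ncpoly set" where
  "left_comms = left_comm ` {is. length is \<ge> 2}"

lemma left_comms_subset_Gamma: "left_comms \<subseteq> Gamma"
  by (auto simp: left_comms_def intro: Gamma_comm)

lemma left_comms_comm_var: "c \<in> left_comms \<Longrightarrow> nc_comm c (nc_var j) \<in> left_comms"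
proof -
  assume "c \<in> left_comms"
  then obtain "is" where "c = left_comm is" "length is \<ge> 2"
    by (auto simp: left_comms_def)
  moreover from this have "left_comm (is @ [j]) = nc_comm (left_comm is) (nc_var j)"
    by (cases "is") (simp_all add: left_comm_def)
  ultimately show ?thesis
    unfolding left_comms_def by (metis (mono_tags) image_eqI length_append_singleton le_Suc_eq mem_Collect_eq)
qed

lemma nc_mono_swap: "nc_mono [j, i] = nc_mono [i, j] + left_comm [j, i]"
proof -
  have "left_comm [j, i] = nc_mono [j, i] - nc_mono [i, j]"
    by (simp add: left_comm_def nc_comm_eq_diff nc_var_def nc_mono_mult_mono)
  then show ?thesis
    by simp
qed

lemma nc_mult_var_swap: "nc_mult c (nc_var j) = nc_mult (nc_var j) c + nc_comm c (nc_var j)"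
  by (simp add: nc_comm_eq_diff)

section \<open>Sorted monomials span\<close>

definition Gamma_cyclic :: "ncpoly \<Rightarrow> ncpoly set" where
  "Gamma_cyclic \<rho> = (\<lambda>\<delta>. nc_mult \<delta> \<rho>) ` Gamma"

definition sorted_span :: "ncpoly set \<Rightarrow> ncpoly set" where
  "sorted_span A = {f. \<exists>F d. finite F \<and> (\<forall>u\<in>F. sorted u \<and> d u \<in> A)
                            \<and> f = (\<Sum>u\<in>F. nc_mult (nc_mono u) (d u))}"

lemma mem_sorted_span:
  "f \<in> sorted_span A \<longleftrightarrow> (\<exists>F d. finite F \<and> (\<forall>u\<in>F. sorted u \<and> d u \<in> A)
                                \<and> f = (\<Sum>u\<in>F. nc_mult (nc_mono u) (d u)))"
  by (simp add: sorted_span_def)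

lemma sorted_spanI:
  "finite F \<Longrightarrow> \<forall>u\<in>F. sorted u \<and> d u \<in> A
    \<Longrightarrow> (\<Sum>u\<in>F. nc_mult (nc_mono u) (d u)) \<in> sorted_span A"
  unfolding mem_sorted_span by blast

lemma sorted_spanE:
  assumes "f \<in> sorted_span A"
  obtains F d where "finite F" "\<forall>u\<in>F. sorted u \<and> d u \<in> A"
    "f = (\<Sum>u\<in>F. nc_mult (nc_mono u) (d u))"
  using assms unfolding mem_sorted_span by (auto intro: that)

lemma subgroup_add_Gamma_cyclic: "subgroup_add (Gamma_cyclic \<rho>)"
proof
  show "0 \<in> Gamma_cyclic \<rho>"
    unfolding Gamma_cyclic_def by (rule image_eqI[of _ _ 0]) simp_all
  show "x + y \<in> Gamma_cyclic \<rho>" if "x \<in> Gamma_cyclic \<rho>" "y \<in> Gamma_cyclic \<rho>" for x y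
    using that unfolding Gamma_cyclic_def
    by (auto simp: nc_mult_add_left[symmetric] intro: Gamma.add_mem)
  show "- x \<in> Gamma_cyclic \<rho>" if "x \<in> Gamma_cyclic \<rho>" for x
    using that unfolding Gamma_cyclic_def
    by (auto simp: nc_mult_minus_left[symmetric] intro: Gamma.uminus_mem)
qed

lemma self_in_Gamma_cyclic: "\<rho> \<in> Gamma_cyclic \<rho>"
  unfolding Gamma_cyclic_def by (rule image_eqI[of _ _ nc_one]) (simp_all add: Gamma_one)

lemma Gamma_cyclic_mult_subset: "c \<in> Gamma \<Longrightarrow> Gamma_cyclic (nc_mult c \<rho>) \<subseteq> Gamma_cyclic \<rho>"
  unfolding Gamma_cyclic_def by (auto simp: nc_mult_assoc[symmetric] intro: Gamma_mult)

lemma Gamma_cyclic_subset_left_ideal_gen: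
  "\<rho> \<in> left_ideal_gen Gamma S \<Longrightarrow> Gamma_cyclic \<rho> \<subseteq> left_ideal_gen Gamma S"
  unfolding Gamma_cyclic_def by (auto intro: lig_lmult)

lemma sorted_span_mono:
  assumes "A \<subseteq> B"
  shows "sorted_span A \<subseteq> sorted_span B"
proof
  fix f
  assume "f \<in> sorted_span A"
  then obtain F d where "finite F" "\<forall>u\<in>F. sorted u \<and> d u \<in> A"
    "f = (\<Sum>u\<in>F. nc_mult (nc_mono u) (d u))"
    by (rule sorted_spanE)
  with assms show "f \<in> sorted_span B"
    by (auto intro: sorted_spanI)
qed

lemma sorted_mono_mult_in_sorted_span:
  "sorted u \<Longrightarrow> a \<in> A \<Longrightarrow> nc_mult (nc_mono u) a \<in> sorted_span A"
  using sorted_spanI[of "{u}" "\<lambda>_. a"] by simp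

lemma subgroup_add_sorted_span:
  assumes "subgroup_add A"
  shows "subgroup_add (sorted_span A)"
proof
  interpret subgroup_add A by fact
  show "0 \<in> sorted_span A"
    using sorted_spanI[of "{}"] by simp
  show "f + g \<in> sorted_span A" if "f \<in> sorted_span A" "g \<in> sorted_span A" for f g
  proof -
    obtain F d where F: "finite F" "\<forall>u\<in>F. sorted u \<and> d u \<in> A"
      "f = (\<Sum>u\<in>F. nc_mult (nc_mono u) (d u))"
      using \<open>f \<in> sorted_span A\<close> by (rule sorted_spanE)
    obtain G e where G: "finite G" "\<forall>u\<in>G. sorted u \<and> e u \<in> A"
      "g = (\<Sum>u\<in>G. nc_mult (nc_mono u) (e u))"
      using \<open>g \<in> sorted_span A\<close> by (rule sorted_spanE)
    define h where "h u = (if u \<in> F then d u else 0) + (if u \<in> G then e u else 0)" for u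
    have "(\<Sum>u\<in>F \<union> G. nc_mult (nc_mono u) (h u))
        = (\<Sum>u\<in>F \<union> G. if u \<in> F then nc_mult (nc_mono u) (d u) else 0)
          + (\<Sum>u\<in>F \<union> G. if u \<in> G then nc_mult (nc_mono u) (e u) else 0)"
      unfolding h_def nc_mult_add_right sum.distrib by (intro arg_cong2[where f = "(+)"] sum.cong) auto
    also have "\<dots> = f + g"
      using F(1,3) G(1,3) by (simp add: sum.inter_restrict[symmetric] Int_absorb1)
    finally have "f + g = (\<Sum>u\<in>F \<union> G. nc_mult (nc_mono u) (h u))" ..
    also have "\<dots> \<in> sorted_span A"
      using F(1,2) G(1,2) by (intro sorted_spanI) (auto simp: h_def add_mem)
    finally show ?thesis .
  qed
  show "- f \<in> sorted_span A" if "f \<in> sorted_span A" for f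
  proof -
    obtain F d where F: "finite F" "\<forall>u\<in>F. sorted u \<and> d u \<in> A"
      "f = (\<Sum>u\<in>F. nc_mult (nc_mono u) (d u))"
      using \<open>f \<in> sorted_span A\<close> by (rule sorted_spanE)
    then have "- f = (\<Sum>u\<in>F. nc_mult (nc_mono u) (- d u))"
      by (simp only: nc_mult_minus_right sum_negf)
    also have "\<dots> \<in> sorted_span A"
      using F(1,2) by (intro sorted_spanI) (auto intro: uminus_mem)
    finally show ?thesis .
  qed
qed

lemma not_sorted_adjacent_descent:
  "\<not> sorted w \<Longrightarrow> \<exists>a i j b. w = a @ [j, i] @ b \<and> i < (j::nat)"
proof (induction w)
  case (Cons x xs)
  show ?case
  proof (cases xs)
    case (Cons y zs)
    show ?thesis
    proof (cases "y < x")
      case True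
      then show ?thesis
        using \<open>xs = y # zs\<close> by (intro exI[of _ "[]"]) auto
    next
      case False
      then have "\<not> sorted xs"
        using Cons.prems \<open>xs = y # zs\<close> by (metis sorted2 not_less)
      then obtain a i j b where "xs = a @ [j, i] @ b" "i < j"
        using Cons.IH by blast
      then show ?thesis
        by (intro exI[of _ "x # a"]) auto
    qed
  qed (use Cons.prems in simp)
qed simp

lemma mono_comm_mono_in_sorted_span:
  assumes shorter: "\<And>v \<rho>. length v < n \<Longrightarrow> nc_mult (nc_mono v) \<rho> \<in> sorted_span (Gamma_cyclic \<rho>)"
    and "length a + length b < n" "c \<in> left_comms"
  shows "nc_mult (nc_mono a) (nc_mult c (nc_mult (nc_mono b) \<rho>)) \<in> sorted_span (Gamma_cyclic \<rho>)"
  using assms(2,3)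
proof (induction b arbitrary: a c)
  case Nil
  have "nc_mult (nc_mono a) (nc_mult c \<rho>) \<in> sorted_span (Gamma_cyclic (nc_mult c \<rho>))"
    using Nil.prems(1) by (intro shorter) simp
  also have "\<dots> \<subseteq> sorted_span (Gamma_cyclic \<rho>)"
    using Nil.prems(2) left_comms_subset_Gamma
    by (intro sorted_span_mono Gamma_cyclic_mult_subset) blast
  finally show ?case
    by (simp add: nc_mono_Nil)
next
  case (Cons j b)
  define Y where "Y = nc_mult (nc_mono b) \<rho>"
  have "nc_mult (nc_mono a) (nc_mult c (nc_mult (nc_mono (j # b)) \<rho>))
      = nc_mult (nc_mono a) (nc_mult (nc_mult c (nc_var j)) Y)"
    using nc_mono_mult_assoc[of "[j]" b \<rho>] by (simp add: Y_def nc_var_def nc_mult_assoc)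
  also have "\<dots> = nc_mult (nc_mono (a @ [j])) (nc_mult c Y)
                + nc_mult (nc_mono a) (nc_mult (nc_comm c (nc_var j)) Y)"
    unfolding nc_mult_var_swap nc_mult_add_left nc_mult_add_right
    by (simp add: nc_mult_assoc nc_var_def nc_mono_mult_assoc)
  also have "\<dots> \<in> sorted_span (Gamma_cyclic \<rho>)"
    unfolding Y_def
    by (intro subgroup_add.add_mem[OF subgroup_add_sorted_span[OF subgroup_add_Gamma_cyclic]] Cons.IH)
       (use Cons.prems left_comms_comm_var in simp_all)
  finally show ?case .
qed

text \<open>Swapping a descent makes a word smaller in \<open>lenlex\<close>; the commutator it creates only
  meets strictly shorter words.\<close>

lemma mono_mult_in_sorted_span: "nc_mult (nc_mono w) \<rho> \<in> sorted_span (Gamma_cyclic \<rho>)"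
proof (induction w arbitrary: \<rho> rule: wf_induct[OF wf_lenlex[OF wf_less_than]])
  case (1 w)
  show ?case
  proof (cases "sorted w")
    case True
    then show ?thesis
      by (rule sorted_mono_mult_in_sorted_span[OF _ self_in_Gamma_cyclic])
  next
    case False
    then obtain a i j b where w: "w = a @ [j, i] @ b" "i < j"
      using not_sorted_adjacent_descent by blast
    have "nc_mult (nc_mono w) \<rho>
        = nc_mult (nc_mono a) (nc_mult (nc_mono [j, i]) (nc_mult (nc_mono b) \<rho>))"
      by (simp add: w nc_mono_mult_assoc)
    also have "\<dots> = nc_mult (nc_mono (a @ [i, j] @ b)) \<rho>
        + nc_mult (nc_mono a) (nc_mult (left_comm [j, i]) (nc_mult (nc_mono b) \<rho>))"
      unfolding nc_mono_swap[of j i] nc_mult_add_left nc_mult_add_right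
      by (simp add: nc_mono_mult_assoc)
    also have "\<dots> \<in> sorted_span (Gamma_cyclic \<rho>)"
    proof (intro subgroup_add.add_mem[OF subgroup_add_sorted_span[OF subgroup_add_Gamma_cyclic]])
      have "(a @ [i, j] @ b, w) \<in> lenlex less_than"
        using w by (simp add: lenlex_conv lex_append_leftI)
      then show "nc_mult (nc_mono (a @ [i, j] @ b)) \<rho> \<in> sorted_span (Gamma_cyclic \<rho>)"
        using "1" by blast
      have "nc_mult (nc_mono v) \<rho>' \<in> sorted_span (Gamma_cyclic \<rho>')" if "length v < length w" for v \<rho>'
        using "1" that by (simp add: lenlex_conv)
      then show "nc_mult (nc_mono a) (nc_mult (left_comm [j, i]) (nc_mult (nc_mono b) \<rho>))
          \<in> sorted_span (Gamma_cyclic \<rho>)"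
        by (rule mono_comm_mono_in_sorted_span) (auto simp: w left_comms_def)
    qed
    finally show ?thesis .
  qed
qed

lemma ZX_mult_in_sorted_span:
  assumes "g \<in> ZX"
  shows "nc_mult g \<rho> \<in> sorted_span (Gamma_cyclic \<rho>)"
proof -
  interpret span: subgroup_add "sorted_span (Gamma_cyclic \<rho>)"
    by (intro subgroup_add_sorted_span subgroup_add_Gamma_cyclic)
  have "nc_mult g \<rho> = (\<Sum>w\<in>{w. g w \<noteq> 0}. nc_smult (g w) (nc_mult (nc_mono w) \<rho>))"
    by (subst ZX_monomial_expansion[OF assms]) (simp only: nc_mult_sum_left nc_mult_smult_left)
  also have "\<dots> \<in> sorted_span (Gamma_cyclic \<rho>)"
    by (intro span.sum_mem subgroup_add_nc_smult[OF span.subgroup_add_axioms] mono_mult_in_sorted_span)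
  finally show ?thesis .
qed

lemma ZX_subset_sorted_span_Gamma: "ZX \<subseteq> sorted_span Gamma"
proof
  fix f
  assume "f \<in> ZX"
  then have "nc_mult f nc_one \<in> sorted_span (Gamma_cyclic nc_one)"
    by (rule ZX_mult_in_sorted_span)
  moreover have "Gamma_cyclic nc_one = Gamma"
    by (simp add: Gamma_cyclic_def)
  ultimately show "f \<in> sorted_span Gamma"
    by simp
qed

lemma ZX_mult_in_sorted_span_left_ideal_gen:
  assumes "r \<in> ZX" "f \<in> sorted_span (left_ideal_gen Gamma S)"
  shows "nc_mult r f \<in> sorted_span (left_ideal_gen Gamma S)"
proof -
  interpret span: subgroup_add "sorted_span (left_ideal_gen Gamma S)"
    by (intro subgroup_add_sorted_span left_ideal_gen.subgroup_add_axioms)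
  obtain F d where F: "finite F" "\<forall>u\<in>F. sorted u \<and> d u \<in> left_ideal_gen Gamma S"
    "f = (\<Sum>u\<in>F. nc_mult (nc_mono u) (d u))"
    using assms(2) by (rule sorted_spanE)
  have "nc_mult r f = (\<Sum>u\<in>F. nc_mult (nc_mult r (nc_mono u)) (d u))"
    unfolding F(3) by (simp only: nc_mult_sum_right nc_mult_assoc)
  also have "\<dots> \<in> sorted_span (left_ideal_gen Gamma S)"
  proof (rule span.sum_mem)
    fix u
    assume "u \<in> F"
    have "nc_mult (nc_mult r (nc_mono u)) (d u) \<in> sorted_span (Gamma_cyclic (d u))"
      using assms(1) by (intro ZX_mult_in_sorted_span nc_mult_in_ZX nc_mono_in_ZX)
    also have "\<dots> \<subseteq> sorted_span (left_ideal_gen Gamma S)"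
      using F(2) \<open>u \<in> F\<close> by (intro sorted_span_mono Gamma_cyclic_subset_left_ideal_gen) blast
    finally show "nc_mult (nc_mult r (nc_mono u)) (d u) \<in> sorted_span (left_ideal_gen Gamma S)" .
  qed
  finally show ?thesis .
qed

lemma left_ideal_gen_ZX_subset_sorted_span:
  "left_ideal_gen ZX S \<subseteq> sorted_span (left_ideal_gen Gamma S)"
proof
  interpret span: subgroup_add "sorted_span (left_ideal_gen Gamma S)"
    by (intro subgroup_add_sorted_span left_ideal_gen.subgroup_add_axioms)
  fix f
  assume "f \<in> left_ideal_gen ZX S"
  then show "f \<in> sorted_span (left_ideal_gen Gamma S)"
  proof (induction rule: left_ideal_gen.induct)
    case (lig_gen s)
    then show ?case
      using sorted_mono_mult_in_sorted_span[of "[]" s] left_ideal_gen.lig_gen[OF lig_gen]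
      by (simp add: nc_mono_Nil)
  next
    case (lig_add f g)
    then show ?case
      by (simp only: nc_add_eq_plus span.add_mem)
  next
    case (lig_neg f)
    then show ?case
      by (simp only: nc_neg_eq_uminus span.uminus_mem)
  next
    case (lig_lmult r f)
    then show ?case
      by (intro ZX_mult_in_sorted_span_left_ideal_gen)
  qed (simp only: nc_zero_eq_0 span.zero_mem)
qed

section \<open>Sorted monomials are independent over \<open>\<Gamma>\<close>\<close>

definition nc_deriv :: "nat \<Rightarrow> ncpoly \<Rightarrow> ncpoly" where
  "nc_deriv i f = (\<lambda>w. \<Sum>(a, b)\<in>splits w. f (a @ i # b))"

lemma nc_deriv_add: "nc_deriv i (f + g) = nc_deriv i f + nc_deriv i g"
  by (rule ext) (simp add: nc_deriv_def sum.distrib case_prod_beta)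

lemma nc_deriv_zero [simp]: "nc_deriv i 0 = 0"
  by (rule ext) (simp add: nc_deriv_def)

lemma nc_deriv_minus: "nc_deriv i (- f) = - nc_deriv i f"
  by (rule ext) (simp add: nc_deriv_def sum_negf case_prod_beta)

lemma nc_deriv_diff: "nc_deriv i (f - g) = nc_deriv i f - nc_deriv i g"
  by (simp only: diff_conv_add_uminus nc_deriv_add nc_deriv_minus)

lemma nc_deriv_sum: "nc_deriv i (\<Sum>a\<in>A. F a) = (\<Sum>a\<in>A. nc_deriv i (F a))"
  using sum_comp_morphism[of "nc_deriv i" F A] by (simp add: nc_deriv_add comp_def)

lemma sum_splits_insert:
  "(\<Sum>(p, q)\<in>splits (a @ i # b). H p q)
     = (\<Sum>(a1, a2)\<in>splits a. H a1 (a2 @ i # b)) + (\<Sum>(b1, b2)\<in>splits b. H (a @ i # b1) b2)"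
proof -
  define S1 where "S1 = (\<lambda>(a1, a2). (a1, a2 @ i # b)) ` splits a"
  define S2 where "S2 = (\<lambda>(b1, b2). (a @ i # b1, b2)) ` splits b"
  have "splits (a @ i # b) \<subseteq> S1 \<union> S2"
  proof
    fix x
    assume "x \<in> splits (a @ i # b)"
    then obtain p q where x: "x = (p, q)" "p @ q = a @ i # b"
      by (auto simp: splits_def)
    then obtain us where "p = a @ us \<and> us @ q = i # b \<or> p @ us = a \<and> q = us @ i # b"
      by (auto simp: append_eq_append_conv2)
    then consider "p = a" "q = i # b" | us' where "p = a @ i # us'" "us' @ q = b"
      | "p @ us = a" "q = us @ i # b"
      by (metis Cons_eq_append_conv append.right_neutral)
    then show "x \<in> S1 \<union> S2"
      by cases (auto simp: S1_def S2_def x splits_def image_iff intro: bexI[of _ "(a, [])"])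
  qed
  then have union: "splits (a @ i # b) = S1 \<union> S2"
    by (auto simp: S1_def S2_def splits_def)
  have "S1 \<inter> S2 = {}"
    by (fastforce simp: S1_def S2_def splits_def)
  then have "(\<Sum>(p, q)\<in>splits (a @ i # b). H p q) = (\<Sum>(p, q)\<in>S1. H p q) + (\<Sum>(p, q)\<in>S2. H p q)"
    unfolding union by (intro sum.union_disjoint) (simp_all add: S1_def S2_def)
  also have "(\<Sum>(p, q)\<in>S1. H p q) = (\<Sum>(a1, a2)\<in>splits a. H a1 (a2 @ i # b))"
    unfolding S1_def by (subst sum.reindex) (auto simp: inj_on_def case_prod_beta)
  also have "(\<Sum>(p, q)\<in>S2. H p q) = (\<Sum>(b1, b2)\<in>splits b. H (a @ i # b1) b2)"
    unfolding S2_def by (subst sum.reindex) (auto simp: inj_on_def case_prod_beta)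
  finally show ?thesis .
qed

lemma nc_deriv_mult: "nc_deriv i (nc_mult f g) = nc_mult (nc_deriv i f) g + nc_mult f (nc_deriv i g)"
proof
  fix w
  have "nc_deriv i (nc_mult f g) w
      = (\<Sum>(a, b)\<in>splits w. \<Sum>(p, q)\<in>splits (a @ i # b). f p * g q)"
    by (simp add: nc_deriv_def nc_mult_conv_splits)
  also have "\<dots> = (\<Sum>(a, b)\<in>splits w. (\<Sum>(a1, a2)\<in>splits a. f a1 * g (a2 @ i # b))
                + (\<Sum>(b1, b2)\<in>splits b. f (a @ i # b1) * g b2))"
    by (intro sum.cong refl) (auto simp: sum_splits_insert[where H = "\<lambda>p q. f p * g q"])
  also have "\<dots> = (\<Sum>(a, b)\<in>splits w. \<Sum>(a1, a2)\<in>splits a. f a1 * g (a2 @ i # b))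
                + (\<Sum>(a, b)\<in>splits w. \<Sum>(b1, b2)\<in>splits b. f (a @ i # b1) * g b2)"
    by (simp add: sum.distrib case_prod_beta)
  also have "\<dots> = (\<Sum>(x, y, z)\<in>splits3 w. f x * g (y @ i # z))
                + (\<Sum>(x, y, z)\<in>splits3 w. f (x @ i # y) * g z)"
    by (simp only: sum_splits_left sum_splits_right)
  also have "(\<Sum>(x, y, z)\<in>splits3 w. f (x @ i # y) * g z) = nc_mult (nc_deriv i f) g w"
  proof -
    have "nc_mult (nc_deriv i f) g w = (\<Sum>(p, q)\<in>splits w. \<Sum>(a, b)\<in>splits p. f (a @ i # b) * g q)"
      by (simp add: nc_mult_conv_splits nc_deriv_def sum_distrib_right case_prod_beta)
    then show ?thesis
      by (simp add: sum_splits_left)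
  qed
  also have "(\<Sum>(x, y, z)\<in>splits3 w. f x * g (y @ i # z)) = nc_mult f (nc_deriv i g) w"
  proof -
    have "nc_mult f (nc_deriv i g) w = (\<Sum>(p, q)\<in>splits w. \<Sum>(b, c)\<in>splits q. f p * g (b @ i # c))"
      by (simp add: nc_mult_conv_splits nc_deriv_def sum_distrib_left case_prod_beta)
    then show ?thesis
      by (simp add: sum_splits_right)
  qed
  finally show "nc_deriv i (nc_mult f g) w = (nc_mult (nc_deriv i f) g + nc_mult f (nc_deriv i g)) w"
    by simp
qed

lemma nc_deriv_one: "nc_deriv i nc_one = 0"
  by (rule ext) (simp add: nc_deriv_def nc_one_def)

lemma nc_deriv_var: "nc_deriv i (nc_var j) = (if i = j then nc_one else 0)"
proof
  fix w
  have "nc_deriv i (nc_var j) w = (\<Sum>x\<in>splits w. if x = ([], []) \<and> i = j then 1 else 0)"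
    unfolding nc_deriv_def nc_var_def nc_mono_def
    by (rule sum.cong) (auto simp: append_eq_Cons_conv)
  also have "\<dots> = (if i = j then nc_one else 0) w"
    by (cases "i = j") (auto simp: nc_one_def sum.delta[OF finite_splits], auto simp: splits_def)
  finally show "nc_deriv i (nc_var j) w = (if i = j then nc_one else 0) w" .
qed

lemma nc_deriv_comm: "nc_deriv i (nc_comm a b) = nc_comm (nc_deriv i a) b + nc_comm a (nc_deriv i b)"
  by (simp add: nc_comm_eq_diff nc_deriv_diff nc_deriv_mult)

lemma nc_deriv_left_comm: "length is \<ge> 2 \<Longrightarrow> nc_deriv i (left_comm is) = 0"
proof -
  assume "length is \<ge> 2"
  then obtain h t r where "is": "is = h # t # r"
    by (metis One_nat_def Suc_1 Suc_le_length_iff)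
  have comm_var: "nc_deriv i c = 0 \<Longrightarrow> nc_deriv i (nc_comm c (nc_var j)) = 0" for c j
    by (simp add: nc_deriv_comm nc_deriv_var, simp add: nc_comm_eq_diff)
  have "nc_deriv i (foldl (\<lambda>c j. nc_comm c (nc_var j)) c js) = 0" if "nc_deriv i c = 0" for c js
    using that by (induction js arbitrary: c) (simp_all add: comm_var)
  moreover have "nc_deriv i (nc_comm (nc_var h) (nc_var t)) = 0"
    by (simp add: nc_deriv_comm nc_deriv_var, simp add: nc_comm_eq_diff)
  ultimately show ?thesis
    by (simp add: "is" left_comm_def)
qed

lemma nc_deriv_Gamma: "f \<in> Gamma \<Longrightarrow> nc_deriv i f = 0"
proof (induction rule: Gamma.induct)
  case (Gamma_add f g)
  then show ?case
    by (simp only: nc_add_eq_plus nc_deriv_add add_0)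
next
  case (Gamma_neg f)
  then show ?case
    by (simp only: nc_neg_eq_uminus nc_deriv_minus minus_zero)
next
  case (Gamma_mult f g)
  then show ?case
    by (simp only: nc_deriv_mult nc_mult_zero_left nc_mult_zero_right add_0)
qed (simp_all add: nc_deriv_left_comm nc_deriv_one)

lemma sorted_remove1_middle:
  assumes "sorted (a @ i # b)"
  shows "remove1 i (a @ i # b) = a @ b"
proof -
  have "sort (remove1 i (a @ i # b)) = a @ b"
    by (rule properties_for_sort) (use assms in \<open>simp_all add: sorted_append\<close>)
  then show ?thesis
    using sorted_remove1[OF assms] by (simp add: sorted_sort_id)
qed

definition deriv_coeff :: "nat \<Rightarrow> nat list \<Rightarrow> int" where
  "deriv_coeff i u = nc_deriv i (nc_mono u) (remove1 i u)"

lemma nc_deriv_sorted_mono: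
  assumes "sorted u"
  shows "nc_deriv i (nc_mono u)
       = (if i \<in> set u then nc_smult (deriv_coeff i u) (nc_mono (remove1 i u)) else 0)"
proof
  fix w
  have "i \<in> set u \<and> w = remove1 i u" if "nc_deriv i (nc_mono u) w \<noteq> 0"
  proof -
    from that obtain x where "x \<in> splits w" "(case x of (a, b) \<Rightarrow> nc_mono u (a @ i # b)) \<noteq> 0"
      unfolding nc_deriv_def by (auto elim: sum.not_neutral_contains_not_neutral)
    then obtain a b where "a @ b = w" "a @ i # b = u"
      by (auto simp: splits_def nc_mono_def split: if_splits)
    then show ?thesis
      using sorted_remove1_middle[of a i b] assms by auto
  qed
  then show "nc_deriv i (nc_mono u) w
      = (if i \<in> set u then nc_smult (deriv_coeff i u) (nc_mono (remove1 i u)) else 0) w"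
    by (cases "i \<in> set u \<and> w = remove1 i u") (auto simp: deriv_coeff_def nc_smult_def nc_mono_def)
qed

lemma deriv_coeff_pos:
  assumes "sorted u" "i \<in> set u"
  shows "deriv_coeff i u \<ge> 1"
proof -
  obtain a b where u: "u = a @ i # b"
    using assms(2) by (metis split_list)
  then have "remove1 i u = a @ b"
    using sorted_remove1_middle assms(1) by blast
  then have "deriv_coeff i u = (\<Sum>(p, q)\<in>splits (a @ b). nc_mono u (p @ i # q))"
    by (simp add: deriv_coeff_def nc_deriv_def)
  also have "\<dots> \<ge> (case (a, b) of (p, q) \<Rightarrow> nc_mono u (p @ i # q))"
    by (rule member_le_sum) (auto simp: nc_mono_def, auto simp: splits_def)
  finally show ?thesis
    by (simp add: u nc_mono_def)
qed

text \<open>Under \<open>\<partial>\<^sub>i\<close> the summand of a sorted word \<open>u\<close> containing \<open>i\<close> moves to the sorted word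
  \<open>remove1 i u\<close>, from which \<open>insort i\<close> recovers \<open>u\<close>.\<close>

lemma nc_deriv_sorted_sum:
  assumes "finite F" "\<forall>u\<in>F. sorted u \<and> \<gamma> u \<in> Gamma"
  shows "nc_deriv i (\<Sum>u\<in>F. nc_mult (nc_mono u) (\<gamma> u))
       = (\<Sum>v\<in>remove1 i ` {u \<in> F. i \<in> set u}.
            nc_mult (nc_mono v) (nc_smult (deriv_coeff i (insort i v)) (\<gamma> (insort i v))))"
proof -
  define Fi where "Fi = {u \<in> F. i \<in> set u}"
  have insort_remove1: "insort i (remove1 i u) = u" if "u \<in> Fi" for u
    using that assms(2) by (auto simp: Fi_def intro: insort_remove1)
  then have "inj_on (remove1 i) Fi"
    by (metis inj_on_def)
  have "nc_deriv i (\<Sum>u\<in>F. nc_mult (nc_mono u) (\<gamma> u))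
      = (\<Sum>u\<in>F. nc_mult (nc_deriv i (nc_mono u)) (\<gamma> u))"
    unfolding nc_deriv_sum using assms(2) by (intro sum.cong) (auto simp: nc_deriv_mult nc_deriv_Gamma)
  also have "\<dots> = (\<Sum>u\<in>F. if i \<in> set u
                    then nc_mult (nc_mono (remove1 i u)) (nc_smult (deriv_coeff i u) (\<gamma> u)) else 0)"
    using assms(2)
    by (intro sum.cong) (auto simp: nc_deriv_sorted_mono nc_mult_smult_left nc_mult_smult_right)
  also have "\<dots> = (\<Sum>u\<in>Fi. nc_mult (nc_mono (remove1 i u)) (nc_smult (deriv_coeff i u) (\<gamma> u)))"
    unfolding Fi_def using assms(1) by (rule sum.inter_filter[symmetric])
  also have "\<dots> = (\<Sum>u\<in>Fi. nc_mult (nc_mono (remove1 i u))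
        (nc_smult (deriv_coeff i (insort i (remove1 i u))) (\<gamma> (insort i (remove1 i u)))))"
    by (rule sum.cong) (simp_all add: insort_remove1)
  also have "\<dots> = (\<Sum>v\<in>remove1 i ` Fi.
        nc_mult (nc_mono v) (nc_smult (deriv_coeff i (insort i v)) (\<gamma> (insort i v))))"
    using \<open>inj_on (remove1 i) Fi\<close> by (simp add: sum.reindex)
  finally show ?thesis
    unfolding Fi_def .
qed

lemma sorted_sum_Nil_coeff:
  assumes "finite F" "[] \<in> F" "\<forall>u\<in>F. u \<noteq> [] \<longrightarrow> \<gamma> u = 0"
  shows "(\<Sum>u\<in>F. nc_mult (nc_mono u) (\<gamma> u)) = \<gamma> []"
proof -
  have "(\<Sum>u\<in>F. nc_mult (nc_mono u) (\<gamma> u)) = (\<Sum>u\<in>F. if u = [] then \<gamma> [] else 0)"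
    using assms(3) by (intro sum.cong) (auto simp: nc_mono_Nil)
  then show ?thesis
    using assms(1,2) by (simp add: sum.delta)
qed

lemma remove1_sorted_words_bounded:
  assumes "\<forall>u\<in>F. sorted u \<and> length u \<le> Suc n \<and> \<gamma> u \<in> Gamma"
  shows "\<forall>v\<in>remove1 i ` {u \<in> F. i \<in> set u}. sorted v \<and> length v \<le> n
           \<and> nc_smult (deriv_coeff i (insort i v)) (\<gamma> (insort i v)) \<in> Gamma"
proof safe
  fix u
  assume "u \<in> F" "i \<in> set u"
  with assms have "sorted u" "length u \<le> Suc n" "\<gamma> u \<in> Gamma"
    by auto
  with \<open>i \<in> set u\<close> show "sorted (remove1 i u)" "length (remove1 i u) \<le> n"
    "nc_smult (deriv_coeff i (insort i (remove1 i u))) (\<gamma> (insort i (remove1 i u))) \<in> Gamma"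
    by (simp_all add: sorted_remove1 length_remove1 insort_remove1
        subgroup_add_nc_smult[OF Gamma.subgroup_add_axioms])
qed

lemma sorted_monos_independent_bounded:
  assumes "finite F" "\<forall>u\<in>F. sorted u \<and> length u \<le> n \<and> \<gamma> u \<in> Gamma"
    and "(\<Sum>u\<in>F. nc_mult (nc_mono u) (\<gamma> u)) = 0"
  shows "\<forall>u\<in>F. \<gamma> u = 0"
  using assms
proof (induction n arbitrary: F \<gamma>)
  case 0
  then show ?case
    using sorted_sum_Nil_coeff[of F \<gamma>] by auto
next
  case (Suc n)
  have "\<gamma> u = 0" if "u \<in> F" "u \<noteq> []" for u
  proof -
    define i where "i = hd u"
    have "i \<in> set u"
      using \<open>u \<noteq> []\<close> by (simp add: i_def)
    define \<delta> where "\<delta> v = nc_smult (deriv_coeff i (insort i v)) (\<gamma> (insort i v))" for v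
    define R where "R = remove1 i ` {u \<in> F. i \<in> set u}"
    have "(\<Sum>v\<in>R. nc_mult (nc_mono v) (\<delta> v)) = nc_deriv i (\<Sum>u\<in>F. nc_mult (nc_mono u) (\<gamma> u))"
      unfolding \<delta>_def R_def using Suc.prems(1,2)
      by (intro nc_deriv_sorted_sum[symmetric]) auto
    also have "\<dots> = 0"
      using Suc.prems(3) by (simp only: nc_deriv_zero)
    finally have "(\<Sum>v\<in>R. nc_mult (nc_mono v) (\<delta> v)) = 0" .
    moreover have "finite R"
      using Suc.prems(1) by (simp add: R_def)
    ultimately have "\<forall>v\<in>R. \<delta> v = 0"
      using Suc.IH remove1_sorted_words_bounded[OF Suc.prems(2), of i, folded R_def \<delta>_def] by blast
    then have "nc_smult (deriv_coeff i u) (\<gamma> u) = 0"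
      using Suc.prems(2) \<open>u \<in> F\<close> \<open>i \<in> set u\<close> by (auto simp: R_def \<delta>_def insort_remove1)
    moreover have "deriv_coeff i u \<ge> 1"
      using deriv_coeff_pos Suc.prems(2) \<open>u \<in> F\<close> \<open>i \<in> set u\<close> by blast
    ultimately show "\<gamma> u = 0"
      by (auto simp: nc_smult_def fun_eq_iff)
  qed
  then show ?case
    using sorted_sum_Nil_coeff[of F \<gamma>] Suc.prems(1,3) by (metis (full_types))
qed

lemma sorted_monos_independent:
  assumes "finite F" "\<forall>u\<in>F. sorted u \<and> \<gamma> u \<in> Gamma"
    and "(\<Sum>u\<in>F. nc_mult (nc_mono u) (\<gamma> u)) = 0"
  shows "\<forall>u\<in>F. \<gamma> u = 0"
  using assms by (intro sorted_monos_independent_bounded[where n = "Max (length ` F)"]) auto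

section \<open>Coefficients with respect to sorted monomials\<close>

definition supp :: "(nat list \<Rightarrow> ncpoly) \<Rightarrow> nat list set" where
  "supp d = {u. d u \<noteq> 0}"

definition Gamma_expansion :: "ncpoly \<Rightarrow> (nat list \<Rightarrow> ncpoly) \<Rightarrow> bool" where
  "Gamma_expansion f d \<longleftrightarrow> (\<forall>u. d u \<in> Gamma) \<and> (\<forall>u. \<not> sorted u \<longrightarrow> d u = 0) \<and> finite (supp d)
     \<and> f = (\<Sum>u\<in>supp d. nc_mult (nc_mono u) (d u))"

definition Gamma_coeff :: "ncpoly \<Rightarrow> nat list \<Rightarrow> ncpoly" where
  "Gamma_coeff f = (SOME d. Gamma_expansion f d)"

lemma Gamma_expansionD:
  assumes "Gamma_expansion f d"
  shows "d u \<in> Gamma" and "\<not> sorted u \<Longrightarrow> d u = 0" and "finite (supp d)"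
    and "f = (\<Sum>u\<in>supp d. nc_mult (nc_mono u) (d u))"
  using assms unfolding Gamma_expansion_def by (elim conjE; simp)+

lemma sum_supp_superset:
  assumes "finite F" "supp d \<subseteq> F"
  shows "(\<Sum>u\<in>F. nc_mult (nc_mono u) (d u)) = (\<Sum>u\<in>supp d. nc_mult (nc_mono u) (d u))"
  by (rule sum.mono_neutral_right[OF assms]) (auto simp: supp_def)

lemma Gamma_expansionI:
  assumes "\<forall>u. d u \<in> Gamma" "\<forall>u. \<not> sorted u \<longrightarrow> d u = 0" "finite F" "supp d \<subseteq> F"
    and "f = (\<Sum>u\<in>F. nc_mult (nc_mono u) (d u))"
  shows "Gamma_expansion f d"
  unfolding Gamma_expansion_def
  using assms(1,2) finite_subset[OF assms(4,3)] sum_supp_superset[OF assms(3,4)] assms(5)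
  by (simp only: simp_thms)

lemma Gamma_expansion_sum:
  assumes "Gamma_expansion f d" "finite F" "supp d \<subseteq> F"
  shows "f = (\<Sum>u\<in>F. nc_mult (nc_mono u) (d u))"
  using assms(1) sum_supp_superset[OF assms(2,3)] unfolding Gamma_expansion_def by (simp only:)

lemma Gamma_expansion_unique:
  assumes d: "Gamma_expansion f d" and e: "Gamma_expansion f e"
  shows "d = e"
proof
  fix u
  define F where "F = supp d \<union> supp e"
  have "finite F"
    using d e unfolding Gamma_expansion_def F_def by (simp only: finite_Un)
  have f_d: "f = (\<Sum>u\<in>F. nc_mult (nc_mono u) (d u))"
    by (rule Gamma_expansion_sum[OF d \<open>finite F\<close>]) (simp add: F_def)
  have f_e: "f = (\<Sum>u\<in>F. nc_mult (nc_mono u) (e u))"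
    by (rule Gamma_expansion_sum[OF e \<open>finite F\<close>]) (simp add: F_def)
  have "(\<Sum>u\<in>F. nc_mult (nc_mono u) (d u - e u))
      = (\<Sum>u\<in>F. nc_mult (nc_mono u) (d u)) - (\<Sum>u\<in>F. nc_mult (nc_mono u) (e u))"
    by (simp only: nc_mult_diff_right sum_subtractf)
  also have "\<dots> = f - f"
    by (simp only: f_d[symmetric] f_e[symmetric])
  also have "\<dots> = 0"
    by (rule diff_self)
  finally have sum_diff: "(\<Sum>u\<in>F. nc_mult (nc_mono u) (d u - e u)) = 0" .
  have "\<forall>u\<in>F. sorted u \<and> d u - e u \<in> Gamma"
  proof
    fix u
    assume "u \<in> F"
    then have "d u \<noteq> 0 \<or> e u \<noteq> 0"
      by (simp add: F_def supp_def)
    then have "sorted u"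
      using Gamma_expansionD(2)[OF d] Gamma_expansionD(2)[OF e] by blast
    moreover have "d u \<in> Gamma" "e u \<in> Gamma"
      using Gamma_expansionD(1) d e by blast+
    ultimately show "sorted u \<and> d u - e u \<in> Gamma"
      by (simp add: Gamma.diff_mem)
  qed
  then have diff_zero: "\<forall>u\<in>F. d u - e u = 0"
    by (rule sorted_monos_independent[OF \<open>finite F\<close> _ sum_diff])
  show "d u = e u"
  proof (cases "u \<in> F")
    case True
    then show ?thesis
      using diff_zero by (metis right_minus_eq)
  next
    case False
    then have "d u = 0" "e u = 0"
      by (simp_all add: F_def supp_def)
    then show ?thesis
      by (simp only:)
  qed
qed

lemma sorted_span_Gamma_expansion:
  assumes "f \<in> sorted_span A" "A \<subseteq> Gamma" "0 \<in> A"
  obtains d where "Gamma_expansion f d" "\<forall>u. d u \<in> A"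
proof -
  obtain F d0 where F: "finite F" "\<forall>u\<in>F. sorted u \<and> d0 u \<in> A"
    "f = (\<Sum>u\<in>F. nc_mult (nc_mono u) (d0 u))"
    using assms(1) by (rule sorted_spanE)
  define d where "d u = (if u \<in> F then d0 u else 0)" for u
  have "\<forall>u. d u \<in> A"
    using F(2) assms(3) by (simp add: d_def)
  moreover have "Gamma_expansion f d"
  proof (rule Gamma_expansionI[OF _ _ F(1)])
    show "\<forall>u. d u \<in> Gamma"
      using \<open>\<forall>u. d u \<in> A\<close> assms(2) by blast
    show "\<forall>u. \<not> sorted u \<longrightarrow> d u = 0"
      using F(2) by (auto simp: d_def)
    show "supp d \<subseteq> F"
      by (auto simp: supp_def d_def)
    show "f = (\<Sum>u\<in>F. nc_mult (nc_mono u) (d u))"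
      unfolding F(3) by (rule sum.cong) (simp_all add: d_def)
  qed
  ultimately show ?thesis
    using that by blast
qed

lemma Gamma_expansion_Gamma_coeff:
  assumes "f \<in> ZX"
  shows "Gamma_expansion f (Gamma_coeff f)"
proof -
  have "f \<in> sorted_span Gamma"
    using ZX_subset_sorted_span_Gamma assms ..
  then obtain d where "Gamma_expansion f d"
    by (rule sorted_span_Gamma_expansion) (simp_all add: Gamma.zero_mem)
  then show ?thesis
    unfolding Gamma_coeff_def by (rule someI[of "Gamma_expansion f"])
qed

lemma Gamma_coeff_eq: "Gamma_expansion f d \<Longrightarrow> Gamma_coeff f = d"
  unfolding Gamma_coeff_def by (metis Gamma_expansion_unique someI)

lemma Gamma_coeff_in_Gamma: "f \<in> ZX \<Longrightarrow> Gamma_coeff f u \<in> Gamma"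
  by (rule Gamma_expansionD(1)[OF Gamma_expansion_Gamma_coeff])

lemma Gamma_coeff_not_sorted: "f \<in> ZX \<Longrightarrow> \<not> sorted u \<Longrightarrow> Gamma_coeff f u = 0"
  by (rule Gamma_expansionD(2)[OF Gamma_expansion_Gamma_coeff])

lemma finite_supp_Gamma_coeff: "f \<in> ZX \<Longrightarrow> finite (supp (Gamma_coeff f))"
  by (rule Gamma_expansionD(3)[OF Gamma_expansion_Gamma_coeff])

lemma Gamma_coeff_add:
  assumes "f \<in> ZX" "g \<in> ZX"
  shows "Gamma_coeff (f + g) = Gamma_coeff f + Gamma_coeff g"
proof (rule Gamma_coeff_eq, rule Gamma_expansionI)
  define F where "F = supp (Gamma_coeff f) \<union> supp (Gamma_coeff g)"
  show "\<forall>u. (Gamma_coeff f + Gamma_coeff g) u \<in> Gamma"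
    using assms by (simp add: Gamma_coeff_in_Gamma Gamma.add_mem)
  show "\<forall>u. \<not> sorted u \<longrightarrow> (Gamma_coeff f + Gamma_coeff g) u = 0"
    using assms by (simp add: Gamma_coeff_not_sorted)
  show "finite F"
    using assms by (simp add: F_def finite_supp_Gamma_coeff)
  show "supp (Gamma_coeff f + Gamma_coeff g) \<subseteq> F"
    by (auto simp: F_def supp_def)
  have "f = (\<Sum>u\<in>F. nc_mult (nc_mono u) (Gamma_coeff f u))"
    "g = (\<Sum>u\<in>F. nc_mult (nc_mono u) (Gamma_coeff g u))"
    using assms \<open>finite F\<close> by (auto intro!: Gamma_expansion_sum Gamma_expansion_Gamma_coeff simp: F_def)
  then show "f + g = (\<Sum>u\<in>F. nc_mult (nc_mono u) ((Gamma_coeff f + Gamma_coeff g) u))"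
    by (simp add: nc_mult_add_right sum.distrib)
qed

lemma Gamma_coeff_sorted_sum:
  assumes "finite K" "\<forall>u\<in>K. sorted u" "\<forall>u. d u \<in> Gamma" "\<forall>u. u \<notin> K \<longrightarrow> d u = 0"
  shows "Gamma_coeff (\<Sum>u\<in>K. nc_mult (nc_mono u) (d u)) = d"
proof (rule Gamma_coeff_eq, rule Gamma_expansionI[OF assms(3) _ assms(1)])
  show "\<forall>u. \<not> sorted u \<longrightarrow> d u = 0" "supp d \<subseteq> K"
    using assms(2,4) by (auto simp: supp_def)
qed simp

lemma left_ideal_gen_ZX_eq:
  assumes "S \<subseteq> Gamma"
  shows "left_ideal_gen ZX S = {f \<in> ZX. \<forall>u. Gamma_coeff f u \<in> left_ideal_gen Gamma S}"
proof (intro Set.set_eqI iffI)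
  fix f
  assume f: "f \<in> left_ideal_gen ZX S"
  have "left_ideal_gen ZX S \<subseteq> ZX"
    using assms Gamma_subset_ZX
    by (intro left_ideal_gen_subset ZX.subgroup_add_axioms nc_mult_in_ZX) auto
  moreover note left_ideal_gen_Gamma_subset[OF assms]
  moreover obtain d where "Gamma_expansion f d" "\<forall>u. d u \<in> left_ideal_gen Gamma S"
  proof (rule sorted_span_Gamma_expansion)
    show "f \<in> sorted_span (left_ideal_gen Gamma S)"
      using left_ideal_gen_ZX_subset_sorted_span f ..
  qed (use calculation(2) in auto)
  ultimately show "f \<in> {f \<in> ZX. \<forall>u. Gamma_coeff f u \<in> left_ideal_gen Gamma S}"
    using f by (auto simp: Gamma_coeff_eq)
next
  fix f
  assume "f \<in> {f \<in> ZX. \<forall>u. Gamma_coeff f u \<in> left_ideal_gen Gamma S}"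
  then have f: "f \<in> ZX" "\<forall>u. Gamma_coeff f u \<in> left_ideal_gen Gamma S"
    by simp_all
  have "f = (\<Sum>u\<in>supp (Gamma_coeff f). nc_mult (nc_mono u) (Gamma_coeff f u))"
    using Gamma_expansion_Gamma_coeff[OF f(1)] unfolding Gamma_expansion_def by blast
  also have "\<dots> \<in> left_ideal_gen ZX S"
    using f(2) left_ideal_gen_mono[OF Gamma_subset_ZX]
    by (intro left_ideal_gen.sum_mem lig_lmult nc_mono_in_ZX) blast
  finally show "f \<in> left_ideal_gen ZX S" .
qed

lemma carrier_add_grp [simp]: "carrier (add_grp A) = A"
  by (simp add: add_grp_def)

lemma mult_add_grp [simp]: "x \<otimes>\<^bsub>add_grp A\<^esub> y = x + y"
  by (simp add: add_grp_def nc_add_eq_plus)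

lemma one_add_grp [simp]: "\<one>\<^bsub>add_grp A\<^esub> = 0"
  by (simp add: add_grp_def nc_zero_eq_0)

lemma comm_group_add_grp:
  assumes "subgroup_add A"
  shows "comm_group (add_grp A)"
proof -
  interpret subgroup_add A by fact
  show ?thesis
    by (rule comm_groupI) (auto simp: add.assoc add.commute add_mem intro: bexI[of _ "- _"] uminus_mem)
qed

lemma subgroup_add_grp:
  assumes "subgroup_add A" "subgroup_add H" "H \<subseteq> A"
  shows "subgroup H (add_grp A)"
proof -
  interpret A: comm_group "add_grp A"
    using assms(1) by (rule comm_group_add_grp)
  interpret H: subgroup_add H by fact
  have inv: "inv\<^bsub>add_grp A\<^esub> x = - x" if "x \<in> A" for x
    using that assms(1) by (intro A.inv_equality) (auto simp: subgroup_add.uminus_mem)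
  show ?thesis
  proof (rule A.subgroupI)
    show "H \<noteq> {}"
      using H.zero_mem by blast
  qed (use assms(3) in \<open>auto simp: inv H.add_mem H.uminus_mem\<close>)
qed

lemma normal_add_grp:
  assumes "subgroup_add A" "subgroup_add H" "H \<subseteq> A"
  shows "H \<lhd> add_grp A"
  using comm_group.subgroup_imp_normal[OF comm_group_add_grp[OF assms(1)] subgroup_add_grp[OF assms]] .

lemma group_add_grp_Mod:
  assumes "subgroup_add A" "subgroup_add H" "H \<subseteq> A"
  shows "group (add_grp A Mod H)"
  using normal.factorgroup_is_group[OF normal_add_grp[OF assms]] .

lemma carrier_add_grp_Mod: "carrier (add_grp A Mod H) = (\<lambda>a. H #>\<^bsub>add_grp A\<^esub> a) ` A"
  by (simp add: carrier_FactGroup)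

lemma r_coset_add_grp: "H #>\<^bsub>add_grp A\<^esub> a = (\<lambda>h. h + a) ` H"
  by (auto simp: r_coset_def)

lemma r_coset_add_grp_eq_self_iff:
  assumes "subgroup_add A" "subgroup_add H" "H \<subseteq> A" "a \<in> A"
  shows "H #>\<^bsub>add_grp A\<^esub> a = H \<longleftrightarrow> a \<in> H"
  using group.coset_join1[OF comm_group.axioms(2)[OF comm_group_add_grp[OF assms(1)]] _ _
      subgroup_add_grp[OF assms(1-3)]]
    group.coset_join2[OF comm_group.axioms(2)[OF comm_group_add_grp[OF assms(1)]] _
      subgroup_add_grp[OF assms(1-3)]] assms(4)
  by auto

lemma r_coset_add_grp_add:
  assumes "subgroup_add A" "subgroup_add H" "H \<subseteq> A" "a \<in> A" "b \<in> A"
  shows "(H #>\<^bsub>add_grp A\<^esub> a) <#>\<^bsub>add_grp A\<^esub> (H #>\<^bsub>add_grp A\<^esub> b) = H #>\<^bsub>add_grp A\<^esub> (a + b)"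
  using normal.rcos_sum[OF normal_add_grp[OF assms(1-3)], of a b] assms(4,5) by simp

section \<open>Left multiplication by a monomial\<close>

lemma lmult_set_Nil: "lmult_set [] A = A"
  by (simp add: lmult_set_def nc_mono_Nil)

lemma lmult_set_mono: "A \<subseteq> B \<Longrightarrow> lmult_set u A \<subseteq> lmult_set u B"
  by (auto simp: lmult_set_def)

lemma nc_mono_mult_in_lmult_set_iff: "nc_mult (nc_mono u) a \<in> lmult_set u A \<longleftrightarrow> a \<in> A"
  unfolding lmult_set_def using inj_nc_mono_mult by (auto dest: injD)

lemma subgroup_add_lmult_set:
  assumes "subgroup_add A"
  shows "subgroup_add (lmult_set u A)"
proof
  interpret subgroup_add A by fact
  show "0 \<in> lmult_set u A"
    unfolding lmult_set_def by (rule image_eqI[of _ _ 0]) simp_all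
  show "x + y \<in> lmult_set u A" if "x \<in> lmult_set u A" "y \<in> lmult_set u A" for x y
    using that unfolding lmult_set_def by (auto simp: nc_mult_add_right[symmetric] intro: add_mem)
  show "- x \<in> lmult_set u A" if "x \<in> lmult_set u A" for x
    using that unfolding lmult_set_def by (auto simp: nc_mult_minus_right[symmetric] intro: uminus_mem)
qed

lemma image_r_coset_add_grp:
  "nc_mult (nc_mono u) ` (H #>\<^bsub>add_grp A\<^esub> a)
     = lmult_set u H #>\<^bsub>add_grp B\<^esub> nc_mult (nc_mono u) a"
  unfolding r_coset_add_grp lmult_set_def image_image by (simp add: nc_mult_add_right image_image)

lemma carrier_lmult_quotient:
  "carrier (add_grp (lmult_set u A) Mod lmult_set u H)
     = (\<lambda>a. lmult_set u H #>\<^bsub>add_grp (lmult_set u A)\<^esub> nc_mult (nc_mono u) a) ` A"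
  unfolding carrier_add_grp_Mod lmult_set_def by (simp add: image_image)

lemma lmult_quotient_hom:
  assumes A: "subgroup_add A" and H: "subgroup_add H" "H \<subseteq> A"
  shows "(\<lambda>C. nc_mult (nc_mono u) ` C)
           \<in> hom (add_grp A Mod H) (add_grp (lmult_set u A) Mod lmult_set u H)"
proof (rule homI)
  fix x
  assume "x \<in> carrier (add_grp A Mod H)"
  then obtain a where "a \<in> A" "x = H #>\<^bsub>add_grp A\<^esub> a"
    by (auto simp: carrier_add_grp_Mod)
  then show "nc_mult (nc_mono u) ` x \<in> carrier (add_grp (lmult_set u A) Mod lmult_set u H)"
    unfolding carrier_lmult_quotient by (simp add: image_r_coset_add_grp[where B = "lmult_set u A"])
next
  fix x y
  assume "x \<in> carrier (add_grp A Mod H)" "y \<in> carrier (add_grp A Mod H)"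
  then obtain a b where a: "a \<in> A" "x = H #>\<^bsub>add_grp A\<^esub> a"
    and b: "b \<in> A" "y = H #>\<^bsub>add_grp A\<^esub> b"
    by (auto simp: carrier_add_grp_Mod)
  have uA: "subgroup_add (lmult_set u A)"
    by (rule subgroup_add_lmult_set[OF A])
  have uH: "subgroup_add (lmult_set u H)" "lmult_set u H \<subseteq> lmult_set u A"
    using subgroup_add_lmult_set[OF H(1)] lmult_set_mono[OF H(2)] by auto
  have "nc_mult (nc_mono u) ` (x \<otimes>\<^bsub>add_grp A Mod H\<^esub> y)
      = lmult_set u H #>\<^bsub>add_grp (lmult_set u A)\<^esub> nc_mult (nc_mono u) (a + b)"
    unfolding a(2) b(2) mult_FactGroup r_coset_add_grp_add[OF A H a(1) b(1)] image_r_coset_add_grp[where B = "lmult_set u A"] ..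
  also have "\<dots> = lmult_set u H #>\<^bsub>add_grp (lmult_set u A)\<^esub>
      (nc_mult (nc_mono u) a + nc_mult (nc_mono u) b)"
    by (simp only: nc_mult_add_right)
  also have "\<dots> = (nc_mult (nc_mono u) ` x) \<otimes>\<^bsub>add_grp (lmult_set u A) Mod lmult_set u H\<^esub>
      (nc_mult (nc_mono u) ` y)"
    unfolding a(2) b(2) image_r_coset_add_grp[where B = "lmult_set u A"] mult_FactGroup using a(1) b(1)
    by (intro r_coset_add_grp_add[OF uA uH, symmetric]) (simp_all add: nc_mono_mult_in_lmult_set_iff)
  finally show "nc_mult (nc_mono u) ` (x \<otimes>\<^bsub>add_grp A Mod H\<^esub> y)
      = (nc_mult (nc_mono u) ` x) \<otimes>\<^bsub>add_grp (lmult_set u A) Mod lmult_set u H\<^esub>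
        (nc_mult (nc_mono u) ` y)" .
qed

lemma lmult_quotient_iso:
  assumes "subgroup_add A" "subgroup_add H" "H \<subseteq> A"
  shows "(\<lambda>C. nc_mult (nc_mono u) ` C)
           \<in> iso (add_grp A Mod H) (add_grp (lmult_set u A) Mod lmult_set u H)"
proof -
  have "inj_on (\<lambda>C. nc_mult (nc_mono u) ` C) (carrier (add_grp A Mod H))"
    by (auto simp: inj_on_def inj_image_eq_iff[OF inj_nc_mono_mult])
  moreover have "(\<lambda>C. nc_mult (nc_mono u) ` C) ` carrier (add_grp A Mod H)
      = carrier (add_grp (lmult_set u A) Mod lmult_set u H)"
    unfolding carrier_lmult_quotient carrier_add_grp_Mod[of A H] image_image image_r_coset_add_grp[where B = "lmult_set u A"] ..
  ultimately show ?thesis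
    using lmult_quotient_hom[OF assms] unfolding iso_def bij_betw_def by blast
qed

section \<open>The quotient by a left ideal of \<open>\<Gamma>\<close>\<close>

locale Gamma_subgroup =
  fixes J :: "ncpoly set"
  assumes subgroup_J: "subgroup_add J" and J_subset_Gamma: "J \<subseteq> Gamma"
begin

definition mono_quotient :: "nat list \<Rightarrow> ncpoly set monoid" where
  "mono_quotient u = add_grp (lmult_set u Gamma) Mod lmult_set u J"

definition mono_coset :: "nat list \<Rightarrow> ncpoly \<Rightarrow> ncpoly set" where
  "mono_coset u a = lmult_set u J #>\<^bsub>add_grp (lmult_set u Gamma)\<^esub> nc_mult (nc_mono u) a"

text \<open>By \<open>lmult_set_Nil\<close>, \<open>mono_quotient []\<close> is \<open>\<Gamma>/J\<close>; so \<open>sorted_quotient_sum\<close> is the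
  right-hand side of the decomposition, with \<open>J\<close> in place of \<open>\<Gamma>\<cdot>S\<close>.\<close>

definition sorted_quotient_sum :: "(ncpoly set \<times> (nat list \<Rightarrow> ncpoly set)) monoid" where
  "sorted_quotient_sum = mono_quotient [] \<times>\<times> sum_group sorted_words mono_quotient"

definition coset_tuple :: "ncpoly \<Rightarrow> ncpoly set \<times> (nat list \<Rightarrow> ncpoly set)" where
  "coset_tuple f = (mono_coset [] (Gamma_coeff f []), \<lambda>u\<in>sorted_words. mono_coset u (Gamma_coeff f u))"

lemma lmult_set_subgroups:
  "subgroup_add (lmult_set u Gamma)" "subgroup_add (lmult_set u J)" "lmult_set u J \<subseteq> lmult_set u Gamma"
  using subgroup_add_lmult_set[OF Gamma.subgroup_add_axioms] subgroup_add_lmult_set[OF subgroup_J]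
    lmult_set_mono[OF J_subset_Gamma] by auto

lemma nc_mono_mult_in_lmult_set_Gamma: "a \<in> Gamma \<Longrightarrow> nc_mult (nc_mono u) a \<in> lmult_set u Gamma"
  by (simp add: nc_mono_mult_in_lmult_set_iff)

lemma group_mono_quotient: "group (mono_quotient u)"
  unfolding mono_quotient_def by (rule group_add_grp_Mod[OF lmult_set_subgroups])

lemma carrier_mono_quotient: "carrier (mono_quotient u) = mono_coset u ` Gamma"
  unfolding mono_quotient_def mono_coset_def carrier_add_grp_Mod lmult_set_def by (simp add: image_image)

lemma one_mono_quotient: "\<one>\<^bsub>mono_quotient u\<^esub> = lmult_set u J"
  by (simp add: mono_quotient_def)

lemma mono_coset_add:
  "a \<in> Gamma \<Longrightarrow> b \<in> Gamma
    \<Longrightarrow> mono_coset u (a + b) = mono_coset u a \<otimes>\<^bsub>mono_quotient u\<^esub> mono_coset u b"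
  unfolding mono_coset_def mono_quotient_def mult_FactGroup nc_mult_add_right
  by (rule r_coset_add_grp_add[OF lmult_set_subgroups nc_mono_mult_in_lmult_set_Gamma
        nc_mono_mult_in_lmult_set_Gamma, symmetric])

lemma mono_coset_eq_one_iff: "a \<in> Gamma \<Longrightarrow> mono_coset u a = \<one>\<^bsub>mono_quotient u\<^esub> \<longleftrightarrow> a \<in> J"
  unfolding mono_coset_def one_mono_quotient
  by (simp add: r_coset_add_grp_eq_self_iff[OF lmult_set_subgroups nc_mono_mult_in_lmult_set_Gamma]
      nc_mono_mult_in_lmult_set_iff)

lemma mono_coset_zero: "mono_coset u 0 = \<one>\<^bsub>mono_quotient u\<^esub>"
  using mono_coset_eq_one_iff[OF Gamma.zero_mem] subgroup_add.zero_mem[OF subgroup_J] by blast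

lemma group_sorted_quotient_sum: "group sorted_quotient_sum"
  unfolding sorted_quotient_sum_def by (intro DirProd_group group_mono_quotient sum_group)

lemma carrier_sorted_quotient_sum:
  "carrier sorted_quotient_sum = carrier (mono_quotient [])
     \<times> {g \<in> \<Pi>\<^sub>E u\<in>sorted_words. carrier (mono_quotient u).
          finite {u \<in> sorted_words. g u \<noteq> \<one>\<^bsub>mono_quotient u\<^esub>}}"
  by (simp add: sorted_quotient_sum_def carrier_sum_group group_mono_quotient)

lemma coset_tuple_hom: "coset_tuple \<in> hom (add_grp ZX) sorted_quotient_sum"
proof (rule homI)
  fix f
  assume "f \<in> carrier (add_grp ZX)"
  then have f: "f \<in> ZX"
    by simp
  have "{u \<in> sorted_words. mono_coset u (Gamma_coeff f u) \<noteq> \<one>\<^bsub>mono_quotient u\<^esub>}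
      \<subseteq> supp (Gamma_coeff f)"
    using mono_coset_zero by (auto simp: supp_def)
  then have "finite {u \<in> sorted_words. mono_coset u (Gamma_coeff f u) \<noteq> \<one>\<^bsub>mono_quotient u\<^esub>}"
    using finite_supp_Gamma_coeff[OF f] by (rule finite_subset)
  then show "coset_tuple f \<in> carrier sorted_quotient_sum"
    unfolding carrier_sorted_quotient_sum coset_tuple_def
    using Gamma_coeff_in_Gamma[OF f] by (auto simp: carrier_mono_quotient cong: conj_cong)
next
  fix f g
  assume "f \<in> carrier (add_grp ZX)" "g \<in> carrier (add_grp ZX)"
  then have f: "f \<in> ZX" and g: "g \<in> ZX"
    by simp_all
  have coset_add: "mono_coset u (Gamma_coeff (f + g) u)
      = mono_coset u (Gamma_coeff f u) \<otimes>\<^bsub>mono_quotient u\<^esub> mono_coset u (Gamma_coeff g u)" for u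
  proof -
    have "Gamma_coeff (f + g) u = Gamma_coeff f u + Gamma_coeff g u"
      using Gamma_coeff_add[OF f g] by (simp only: plus_fun_apply)
    then show ?thesis
      using mono_coset_add[OF Gamma_coeff_in_Gamma[OF f] Gamma_coeff_in_Gamma[OF g]] by (simp only:)
  qed
  show "coset_tuple (f \<otimes>\<^bsub>add_grp ZX\<^esub> g) = coset_tuple f \<otimes>\<^bsub>sorted_quotient_sum\<^esub> coset_tuple g"
    unfolding sorted_quotient_sum_def coset_tuple_def mult_add_grp mult_DirProd mult_sum_group
    by (auto simp: coset_add intro!: restrict_ext)
qed

lemma coset_tuple_surj: "coset_tuple ` ZX = carrier sorted_quotient_sum"
proof
  show "coset_tuple ` ZX \<subseteq> carrier sorted_quotient_sum"
    using coset_tuple_hom by (auto simp: hom_def)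
next
  show "carrier sorted_quotient_sum \<subseteq> coset_tuple ` ZX"
  proof
    fix x
    assume x: "x \<in> carrier sorted_quotient_sum"
    obtain C0 g where xg: "x = (C0, g)"
      by (cases x)
    obtain a0 where a0: "a0 \<in> Gamma" "C0 = mono_coset [] a0"
      using x by (auto simp: xg carrier_sorted_quotient_sum carrier_mono_quotient)
    have g: "g \<in> (\<Pi>\<^sub>E u\<in>sorted_words. carrier (mono_quotient u))"
      and finite_K: "finite {u \<in> sorted_words. g u \<noteq> \<one>\<^bsub>mono_quotient u\<^esub>}"
      using x by (auto simp: xg carrier_sorted_quotient_sum)
    define K where "K = {u \<in> sorted_words. g u \<noteq> \<one>\<^bsub>mono_quotient u\<^esub>}"
    have "\<forall>u\<in>sorted_words. \<exists>a. a \<in> Gamma \<and> g u = mono_coset u a"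
      using g by (auto simp: carrier_mono_quotient)
    then obtain \<gamma> where \<gamma>: "\<forall>u\<in>sorted_words. \<gamma> u \<in> Gamma \<and> g u = mono_coset u (\<gamma> u)"
      by (rule bchoice[THEN exE])
    define d where "d u = (if u = [] then a0 else if u \<in> K then \<gamma> u else 0)" for u
    define f where "f = (\<Sum>u\<in>insert [] K. nc_mult (nc_mono u) (d u))"
    have d_Gamma: "\<forall>u. d u \<in> Gamma"
      using a0 \<gamma> by (auto simp: d_def K_def Gamma.zero_mem)
    have coeff: "Gamma_coeff f = d"
      unfolding f_def using finite_K d_Gamma
      by (intro Gamma_coeff_sorted_sum) (auto simp: K_def d_def sorted_words_def)
    have "(\<lambda>u\<in>sorted_words. mono_coset u (d u)) = g"
    proof
      fix u
      show "(\<lambda>u\<in>sorted_words. mono_coset u (d u)) u = g u"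
        using \<gamma> mono_coset_zero PiE_arb[OF g]
        by (cases "u \<in> sorted_words"; cases "u \<in> K") (auto simp: d_def K_def sorted_words_def)
    qed
    then have "coset_tuple f = x"
      by (simp add: coset_tuple_def coeff xg a0 d_def)
    moreover have "f \<in> ZX"
      unfolding f_def using d_Gamma Gamma_subset_ZX
      by (intro ZX.sum_mem nc_mult_in_ZX nc_mono_in_ZX) auto
    ultimately show "x \<in> coset_tuple ` ZX"
      by blast
  qed
qed

lemma coset_tuple_eq_one_iff:
  assumes "f \<in> ZX"
  shows "coset_tuple f = \<one>\<^bsub>sorted_quotient_sum\<^esub> \<longleftrightarrow> (\<forall>u. Gamma_coeff f u \<in> J)"
proof -
  note coset_one_iff = mono_coset_eq_one_iff[OF Gamma_coeff_in_Gamma[OF assms]]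
  have "(\<lambda>u\<in>sorted_words. mono_coset u (Gamma_coeff f u)) = (\<lambda>u\<in>sorted_words. \<one>\<^bsub>mono_quotient u\<^esub>)
      \<longleftrightarrow> (\<forall>u\<in>sorted_words. Gamma_coeff f u \<in> J)"
  proof
    assume eq: "(\<lambda>u\<in>sorted_words. mono_coset u (Gamma_coeff f u))
      = (\<lambda>u\<in>sorted_words. \<one>\<^bsub>mono_quotient u\<^esub>)"
    show "\<forall>u\<in>sorted_words. Gamma_coeff f u \<in> J"
    proof
      fix u
      assume "u \<in> sorted_words"
      then have "mono_coset u (Gamma_coeff f u) = \<one>\<^bsub>mono_quotient u\<^esub>"
        using fun_cong[OF eq, of u] by simp
      then show "Gamma_coeff f u \<in> J"
        using coset_one_iff by blast
    qed
  qed (use coset_one_iff in \<open>blast intro: restrict_ext\<close>)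
  then have "coset_tuple f = \<one>\<^bsub>sorted_quotient_sum\<^esub>
      \<longleftrightarrow> Gamma_coeff f [] \<in> J \<and> (\<forall>u\<in>sorted_words. Gamma_coeff f u \<in> J)"
    unfolding coset_tuple_def sorted_quotient_sum_def one_DirProd one_sum_group prod.inject coset_one_iff
    by (simp only:)
  also have "\<dots> \<longleftrightarrow> (\<forall>u. Gamma_coeff f u \<in> J)"
  proof (intro iffI allI)
    fix u
    assume sorted_in_J: "Gamma_coeff f [] \<in> J \<and> (\<forall>u\<in>sorted_words. Gamma_coeff f u \<in> J)"
    show "Gamma_coeff f u \<in> J"
    proof (cases "sorted u")
      case True
      with sorted_in_J show ?thesis
        by (cases "u = []") (auto simp: sorted_words_def)
    next
      case False
      then show ?thesis
        using Gamma_coeff_not_sorted[OF assms] subgroup_add.zero_mem[OF subgroup_J] by simp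
    qed
  qed blast
  finally show ?thesis .
qed

theorem ZX_quotient_iso: "add_grp ZX Mod {f \<in> ZX. \<forall>u. Gamma_coeff f u \<in> J} \<cong> sorted_quotient_sum"
proof -
  interpret group_hom "add_grp ZX" sorted_quotient_sum coset_tuple
    unfolding group_hom_def group_hom_axioms_def
    using comm_group.axioms(2)[OF comm_group_add_grp[OF ZX.subgroup_add_axioms]]
      group_sorted_quotient_sum coset_tuple_hom by blast
  have "kernel (add_grp ZX) sorted_quotient_sum coset_tuple = {f \<in> ZX. \<forall>u. Gamma_coeff f u \<in> J}"
    unfolding kernel_def carrier_add_grp by (rule Collect_cong) (use coset_tuple_eq_one_iff in blast)
  moreover have "coset_tuple ` carrier (add_grp ZX) = carrier sorted_quotient_sum"
    using coset_tuple_surj by simp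
  ultimately show ?thesis
    using FactGroup_iso by simp
qed

end

theorem corollary2p5:
  fixes S :: "ncpoly set"
  assumes "S \<subseteq> Gamma"
  shows "(add_grp ZX Mod left_ideal_gen ZX S) \<cong>
           ((add_grp Gamma Mod left_ideal_gen Gamma S) \<times>\<times>
            sum_group sorted_words
              (\<lambda>u. add_grp (lmult_set u Gamma) Mod lmult_set u (left_ideal_gen Gamma S)))
         \<and> (\<forall>u \<in> sorted_words.
           (\<lambda>C. (\<lambda>f. nc_mult (nc_mono u) f) ` C)
             \<in> iso (add_grp Gamma Mod left_ideal_gen Gamma S)
                   (add_grp (lmult_set u Gamma) Mod lmult_set u (left_ideal_gen Gamma S)))"
proof -
  note J_subset = left_ideal_gen_Gamma_subset[OF assms]
  interpret Gamma_subgroup "left_ideal_gen Gamma S"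
    by (rule Gamma_subgroup.intro[OF left_ideal_gen.subgroup_add_axioms J_subset])
  have "add_grp ZX Mod left_ideal_gen ZX S \<cong> sorted_quotient_sum"
    using ZX_quotient_iso by (simp add: left_ideal_gen_ZX_eq[OF assms])
  moreover have "(\<lambda>C. nc_mult (nc_mono u) ` C)
      \<in> iso (add_grp Gamma Mod left_ideal_gen Gamma S)
            (add_grp (lmult_set u Gamma) Mod lmult_set u (left_ideal_gen Gamma S))" for u
    by (rule lmult_quotient_iso[OF Gamma.subgroup_add_axioms left_ideal_gen.subgroup_add_axioms J_subset])
  ultimately show ?thesis
    unfolding sorted_quotient_sum_def mono_quotient_def[abs_def] lmult_set_Nil by blast
qed

end
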